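(* For all 5-complex numbers $u',u''$, the modulus of their product satisfies $|u'u''|\leq \sqrt{5}\,|u'|\,|u''|$.
   Context: A 5-complex number is an expression $u=x_0+h_1x_1+h_2x_2+h_3x_3+h_4x_4$ with $x_0,\dots,x_4\in\mathbb{R}$. Addition is componentwise. Multiplication is the commutative, associative, bilinear product determined by $h_jh_k=h_{(j+k)\bmod 5}$ with $h_0=1$; explicitly, if $u=\sum_j h_jx_j$ and $u'=\sum_j h_jx'_j$, then the coefficient of $h_l$ in $uu'$ is $\sum_{j+k\equiv l \pmod 5} x_jx'_k$. The modulus of $u$ is $|u|=d=(x_0^2+x_1^2+x_2^2+x_3^2+x_4^2)^{1/2}$. *)

theory Defs
  imports "HOL-Analysis.Analysis"
begin

text \<open>A 5-complex number x0 + h1 x1 + ... + h4 x4 is represented by its coefficient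
vector in real^5, indexed by the numeral type 5 (= integers mod 5, with addition mod 5).\<close>

type_synonym complex5 = "real ^ 5"

definition mult5 :: "complex5 \<Rightarrow> complex5 \<Rightarrow> complex5" where
  "mult5 u v = (\<chi> l. \<Sum>j\<in>(UNIV :: 5 set). \<Sum>k\<in>(UNIV :: 5 set).
      (if j + k = l then u $ j * v $ k else 0))"

definition modulus5 :: "complex5 \<Rightarrow> real" where
  "modulus5 u = sqrt (\<Sum>j\<in>(UNIV :: 5 set). (u $ j)^2)"

end

theory Submission
  imports Defs
begin

text \<open>The product of 5-complex numbers is the cyclic convolution over \<open>\<int>/5\<int>\<close>, and the
bound holds for convolution over any finite abelian group of order \<open>n\<close>. Each coefficient of
\<open>u * v\<close> is the inner product of \<open>u\<close> with a reflected translate of \<open>v\<close>, which has the same norm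
as \<open>v\<close>; so by Cauchy-Schwarz every coefficient is bounded by \<open>|u| |v|\<close>, and summing the
squares of the \<open>n\<close> coefficients gives the factor \<open>sqrt n\<close>.\<close>

definition cyclic_conv :: "(real, 'n::{finite, ab_group_add}) vec \<Rightarrow> (real, 'n) vec \<Rightarrow> (real, 'n) vec" where
  "cyclic_conv u v = (\<chi> l. \<Sum>j\<in>UNIV. u $ j * v $ (l - j))"

lemma modulus5_eq_norm: "modulus5 u = norm u"
  by (simp add: modulus5_def norm_vec_def L2_set_def)

lemma mult5_eq_cyclic_conv: "mult5 u v = cyclic_conv u v"
proof -
  have "(\<Sum>k\<in>UNIV. if j + k = l then u $ j * v $ k else 0) = u $ j * v $ (l - j)"
    for j l :: 5
  proof -
    have "(j + k = l) = (k = l - j)" for k by (auto simp: algebra_simps)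
    then show ?thesis by (simp add: sum.delta')
  qed
  then show ?thesis by (simp add: mult5_def cyclic_conv_def)
qed

lemma norm_reflect_translate:
  fixes v :: "real ^ 'n::{finite, ab_group_add}"
  shows "norm (\<chi> j. v $ (l - j)) = norm v"
proof -
  have "(\<Sum>j\<in>UNIV. (v $ (l - j))\<^sup>2) = (\<Sum>k\<in>UNIV. (v $ k)\<^sup>2)"
    by (rule sum.reindex_bij_witness[where i="\<lambda>k. l - k" and j="\<lambda>j. l - j"]) auto
  then show ?thesis by (simp add: norm_vec_def L2_set_def)
qed

lemma abs_cyclic_conv_nth_le: "\<bar>cyclic_conv u v $ l\<bar> \<le> norm u * norm v"
proof -
  have "cyclic_conv u v $ l = u \<bullet> (\<chi> j. v $ (l - j))"
    by (simp add: cyclic_conv_def inner_vec_def)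
  then show ?thesis
    using Cauchy_Schwarz_ineq2[of u "\<chi> j. v $ (l - j)"] by (simp add: norm_reflect_translate)
qed

lemma norm_le_sqrt_card_if_components_le:
  fixes x :: "real ^ 'n"
  assumes "\<And>i. \<bar>x $ i\<bar> \<le> c"
  shows "norm x \<le> sqrt CARD('n) * c"
proof -
  have "c \<ge> 0" using assms[of undefined] by linarith
  have "(\<Sum>i\<in>UNIV. (x $ i)\<^sup>2) \<le> (\<Sum>i\<in>(UNIV :: 'n set). c\<^sup>2)"
    by (rule sum_mono) (metis abs_ge_zero assms power2_abs power_mono)
  then have "norm x \<le> sqrt (CARD('n) * c\<^sup>2)"
    by (simp add: norm_vec_def L2_set_def)
  also have "\<dots> = sqrt CARD('n) * c"
    using \<open>c \<ge> 0\<close> by (simp add: real_sqrt_mult)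
  finally show ?thesis .
qed

lemma norm_cyclic_conv_le:
  fixes u v :: "real ^ 'n::{finite, ab_group_add}"
  shows "norm (cyclic_conv u v) \<le> sqrt CARD('n) * norm u * norm v"
  using norm_le_sqrt_card_if_components_le[OF abs_cyclic_conv_nth_le]
  by (simp add: mult.assoc)

theorem mainTheorem1:
  fixes u' u'' :: complex5
  shows "modulus5 (mult5 u' u'') \<le> sqrt 5 * modulus5 u' * modulus5 u''"
  using norm_cyclic_conv_le[of u' u'']
  by (simp add: modulus5_eq_norm mult5_eq_cyclic_conv)

end
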